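(* Let $X$ be a flag simplicial complex triangulating $S^5$. Assume $X$ has an edge $\eta$ whose link $\mathrm{Lk}_\eta$ is a cross-polytope, and that $h_X(-1)<0$ (equivalently, the coefficient of $t^3$ in $\gamma_X$ is positive). Then for every sufficiently large natural number $m$, the h-polynomial of the $m$-fold subdivision $\mathrm{Sub}^m_\eta(X)$ has a non-real root.
   Context: Simplicial complexes contain the empty face; $\#\sigma$ is the number of vertices of $\sigma$. Link: $\mathrm{Lk}_\sigma=\{\tau\in X:\sigma\cup\tau\in X,\ \sigma\cap\tau=\emptyset\}$. Flag: every set of pairwise adjacent vertices is a face. The join of complexes $X,Y$ on disjoint vertex sets is $\{\sigma\cup\tau:\sigma\in X,\tau\in Y\}$; the $k$-dimensional cross-polytope is the $(k+1)$-fold join of the complex consisting of two vertices and no edge. f-polynomial: $f_X(t)=\sum_{\sigma\in X}t^{\#\sigma}$; for $X$ a triangulation of $S^{n-1}$, $h_X$ is defined by $(1+t)^n h_X(\frac1{1+t})=t^nf_X(\frac1t)$, and $\gamma_X$ is the unique polynomial with $h_X(t)=(1+t)^{n}\gamma_X\!\left(\frac{t}{(1+t)^2}\right)$. Edge subdivision: for an edge $\eta=\{s,t\}$ of $X$ and a new vertex $e$, $\mathrm{Sub}_\eta(X)=\{\sigma:\eta\not\subset\sigma\in X\}\cup\{\sigma\cup\{e\},\sigma\cup\{s,e\},\sigma\cup\{t,e\}:\sigma\in\mathrm{Lk}_\eta\}$. The $m$-fold subdivision $\mathrm{Sub}^m_\eta(X)$ is obtained by $m$ successive edge subdivisions, the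 first along $\eta$ and each subsequent one along an edge joining the most recently added vertex to an endpoint of the previously subdivided edge (such an edge has link equal to $\mathrm{Lk}_\eta$). *)

theory Defs
  imports "HOL-Analysis.Analysis" "HOL-Computational_Algebra.Polynomial"
begin

definition simplicial_complex :: "'a set set \<Rightarrow> bool" where
  "simplicial_complex K \<longleftrightarrow> finite K \<and> {} \<in> K \<and> (\<forall>\<sigma>\<in>K. finite \<sigma>)
     \<and> (\<forall>\<sigma>\<in>K. \<forall>\<tau>. \<tau> \<subseteq> \<sigma> \<longrightarrow> \<tau> \<in> K)"

definition vertices :: "'a set set \<Rightarrow> 'a set" where
  "vertices K = \<Union>K"

definition link :: "'a set set \<Rightarrow> 'a set \<Rightarrow> 'a set set" where
  "link K \<sigma> = {\<tau> \<in> K. \<sigma> \<union> \<tau> \<in> K \<and> \<sigma> \<inter> \<tau> = {}}"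

definition flag :: "'a set set \<Rightarrow> bool" where
  "flag K \<longleftrightarrow> (\<forall>S. S \<subseteq> vertices K \<and> (\<forall>u\<in>S. \<forall>v\<in>S. u \<noteq> v \<longrightarrow> {u, v} \<in> K) \<longrightarrow> S \<in> K)"

definition join :: "'a set set \<Rightarrow> 'a set set \<Rightarrow> 'a set set" where
  "join K L = {\<sigma> \<union> \<tau> | \<sigma> \<tau>. \<sigma> \<in> K \<and> \<tau> \<in> L}"

fun cross :: "(nat \<Rightarrow> 'a) \<Rightarrow> (nat \<Rightarrow> 'a) \<Rightarrow> nat \<Rightarrow> 'a set set" where
  "cross a b 0 = {{}}"
| "cross a b (Suc n) = join (cross a b n) {{}, {a n}, {b n}}"

definition is_cross_polytope :: "'a set set \<Rightarrow> bool" where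
  "is_cross_polytope K \<longleftrightarrow> (\<exists>n a b. n \<ge> 1 \<and> inj_on a {..<n} \<and> inj_on b {..<n}
      \<and> a ` {..<n} \<inter> b ` {..<n} = {} \<and> K = cross a b n)"

text \<open>Geometric realization of a finite simplicial complex, as a subspace of the
  product space 'a \<Rightarrow> real (barycentric coordinates supported on a face).\<close>
definition realization :: "'a set set \<Rightarrow> ('a \<Rightarrow> real) topology" where
  "realization K = subtopology (powertop_real UNIV)
     {x. (\<forall>v. 0 \<le> x v) \<and> {v. x v \<noteq> 0} \<in> K \<and> sum x {v. x v \<noteq> 0} = 1}"

definition triangulates_sphere :: "'a set set \<Rightarrow> nat \<Rightarrow> bool" where
  "triangulates_sphere K d \<longleftrightarrow> simplicial_complex K \<and> realization K homeomorphic_space nsphere d"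

definition f_poly :: "'a set set \<Rightarrow> real poly" where
  "f_poly K = (\<Sum>\<sigma>\<in>K. monom 1 (card \<sigma>))"

text \<open>h-polynomial of a triangulation of S^(n-1), i.e. the unique polynomial with
  (1+t)^n h(1/(1+t)) = t^n f(1/t); explicitly h(t) = sum over faces of t^#s (1-t)^(n-#s).\<close>
definition h_poly :: "nat \<Rightarrow> 'a set set \<Rightarrow> real poly" where
  "h_poly n K = (\<Sum>\<sigma>\<in>K. monom 1 (card \<sigma>) * [:1, -1:] ^ (n - card \<sigma>))"

definition edge_sub :: "'a set \<Rightarrow> 'a \<Rightarrow> 'a set set \<Rightarrow> 'a set set" where
  "edge_sub \<eta> e K = {\<sigma> \<in> K. \<not> \<eta> \<subseteq> \<sigma>}
     \<union> {\<sigma> \<union> \<rho> | \<sigma> \<rho>. \<sigma> \<in> link K \<eta> \<and> (\<rho> = {e} \<or> (\<exists>s\<in>\<eta>. \<rho> = {s, e}))}"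

fun sub_iter :: "(nat \<Rightarrow> 'a set) \<Rightarrow> (nat \<Rightarrow> 'a) \<Rightarrow> nat \<Rightarrow> 'a set set \<Rightarrow> 'a set set" where
  "sub_iter ed e 0 K = K"
| "sub_iter ed e (Suc k) K = edge_sub (ed k) (e k) (sub_iter ed e k K)"

definition multi_sub_data :: "'a set set \<Rightarrow> 'a set \<Rightarrow> nat \<Rightarrow> (nat \<Rightarrow> 'a set) \<Rightarrow> (nat \<Rightarrow> 'a) \<Rightarrow> bool" where
  "multi_sub_data K \<eta> m ed e \<longleftrightarrow> inj_on e {..<m} \<and> e ` {..<m} \<inter> vertices K = {}
     \<and> ed 0 = \<eta> \<and> (\<forall>k. Suc k < m \<longrightarrow> (\<exists>p\<in>ed k. ed (Suc k) = {e k, p}))"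

end

(*
  Subdividing an edge \<eta> = {s, t} with link L replaces each face \<tau> \<union> \<eta> (\<tau> \<in> L) by
  \<tau> \<union> {e}, \<tau> \<union> {s, e} and \<tau> \<union> {t, e}, and the new edges {e, p} (p \<in> \<eta>) have link L again.
  Hence h(Sub^m X) = h(X) + m \<Delta> with \<Delta> depending only on L. By invariance of domain a
  triangulated 5-sphere has no face with more than 6 vertices and no maximal face with fewer,
  which forces a cross-polytope link of an edge to have 8 vertices; then \<Delta> = t (1 + t)^4.

  If all roots a_i of a real polynomial with nonzero constant term are real, then
  \<Sum> a_i^-4 \<ge> 0, and Newton's identities express this sum through the first five
  coefficients. After the shift t \<mapsto> t - 1, which turns \<Delta> into t^5 - t^4, the sum for
  h(Sub^m X) becomes c + 4 m / h_X(-1); it is negative for large m because h_X(-1) < 0.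
*)
theory Submission
  imports Defs
    "HOL-Computational_Algebra.Fundamental_Theorem_Algebra"
    "HOL-Library.Complex_Order"
    "HOL-Homology.Invariance_of_Domain"
begin

section \<open>Edge subdivisions\<close>

lemma simplicial_complex_downward_closed:
  "simplicial_complex K \<Longrightarrow> \<sigma> \<in> K \<Longrightarrow> \<tau> \<subseteq> \<sigma> \<Longrightarrow> \<tau> \<in> K"
  unfolding simplicial_complex_def by blast

lemma link_downward_closed:
  assumes "simplicial_complex K" "\<tau> \<in> link K \<eta>" "\<tau>' \<subseteq> \<tau>"
  shows "\<tau>' \<in> link K \<eta>"
proof -
  have "\<tau> \<in> K" "\<eta> \<union> \<tau> \<in> K" "\<eta> \<inter> \<tau> = {}"
    using assms(2) unfolding link_def by auto
  moreover have "\<eta> \<union> \<tau>' \<subseteq> \<eta> \<union> \<tau>"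
    using assms(3) by blast
  ultimately show ?thesis
    using simplicial_complex_downward_closed[OF assms(1)] assms(3) unfolding link_def by blast
qed

lemma faces_containing_eq_image_link:
  assumes "simplicial_complex K"
  shows "{\<sigma> \<in> K. \<eta> \<subseteq> \<sigma>} = (\<lambda>\<tau>. \<tau> \<union> \<eta>) ` link K \<eta>"
proof (intro equalityI subsetI)
  fix \<sigma> assume "\<sigma> \<in> {\<sigma> \<in> K. \<eta> \<subseteq> \<sigma>}"
  then have "\<sigma> - \<eta> \<in> link K \<eta>" "\<sigma> = (\<sigma> - \<eta>) \<union> \<eta>"
    using simplicial_complex_downward_closed[OF assms, of \<sigma> "\<sigma> - \<eta>"] unfolding link_def
    by (auto simp: sup.absorb2)
  then show "\<sigma> \<in> (\<lambda>\<tau>. \<tau> \<union> \<eta>) ` link K \<eta>" by blast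
qed (auto simp: link_def Un_commute)

lemma notin_face_if_notin_vertices: "e \<notin> vertices K \<Longrightarrow> \<sigma> \<in> K \<Longrightarrow> e \<notin> \<sigma>"
  unfolding vertices_def by auto

lemma face_if_empty_in_link: "{} \<in> link K \<sigma> \<Longrightarrow> \<sigma> \<in> K"
  unfolding link_def by simp

lemma edge_sub_alt:
  assumes "\<eta> \<noteq> {}"
  shows "edge_sub \<eta> e K = {\<sigma> \<in> K. \<not> \<eta> \<subseteq> \<sigma>}
    \<union> {\<tau> \<union> \<rho> | \<tau> \<rho>. \<tau> \<in> link K \<eta> \<and> e \<in> \<rho> \<and> (\<exists>p\<in>\<eta>. \<rho> \<subseteq> {p, e})}"
proof -
  have "(\<rho> = {e} \<or> (\<exists>s\<in>\<eta>. \<rho> = {s, e})) \<longleftrightarrow> e \<in> \<rho> \<and> (\<exists>p\<in>\<eta>. \<rho> \<subseteq> {p, e})" for \<rho>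
  proof
    assume "e \<in> \<rho> \<and> (\<exists>p\<in>\<eta>. \<rho> \<subseteq> {p, e})"
    then obtain p where "p \<in> \<eta>" "e \<in> \<rho>" "\<rho> \<subseteq> {p, e}" by blast
    then have "\<rho> = {e} \<or> \<rho> = {p, e}" by blast
    then show "\<rho> = {e} \<or> (\<exists>s\<in>\<eta>. \<rho> = {s, e})" using \<open>p \<in> \<eta>\<close> by blast
  qed (use assms in blast)
  then show ?thesis
    unfolding edge_sub_def by (simp only:)
qed

lemma subset_of_new_face_in_edge_sub:
  assumes K: "simplicial_complex K" and "card \<eta> = 2"
    and "\<tau> \<in> link K \<eta>" "e \<in> \<rho>" "p \<in> \<eta>" "\<rho> \<subseteq> {p, e}" "\<sigma> \<subseteq> \<tau> \<union> \<rho>"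
  shows "\<sigma> \<in> edge_sub \<eta> e K"
proof -
  have "\<eta> \<noteq> {}" using assms(2) by auto
  note sub_eq = edge_sub_alt[OF this, of e K]
  show ?thesis
  proof (cases "e \<in> \<sigma>")
    case True
    have "\<sigma> \<inter> \<tau> \<in> link K \<eta>" by (rule link_downward_closed[OF K assms(3)]) blast
    moreover have "\<sigma> = (\<sigma> \<inter> \<tau>) \<union> (\<sigma> \<inter> \<rho>)" using assms(7) by blast
    moreover have "e \<in> \<sigma> \<inter> \<rho>" "\<sigma> \<inter> \<rho> \<subseteq> {p, e}" using True assms(4,6) by auto
    ultimately have "\<exists>\<tau> \<rho>. \<sigma> = \<tau> \<union> \<rho> \<and> \<tau> \<in> link K \<eta> \<and> e \<in> \<rho> \<and> (\<exists>p\<in>\<eta>. \<rho> \<subseteq> {p, e})"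
      using assms(5) by blast
    then show ?thesis
      unfolding sub_eq by blast
  next
    case False
    have "\<eta> \<union> \<tau> \<in> K" "\<tau> \<inter> \<eta> = {}" using assms(3) unfolding link_def by auto
    moreover have "\<sigma> \<subseteq> \<tau> \<union> {p}" using False assms(6,7) by blast
    ultimately have "\<sigma> \<in> K" "\<sigma> \<inter> \<eta> \<subseteq> {p}"
      using simplicial_complex_downward_closed[OF K] assms(5) by blast+
    moreover have "\<not> \<eta> \<subseteq> {p}"
      using card_mono[of "{p}" \<eta>] assms(2) by auto
    ultimately show ?thesis
      unfolding sub_eq by blast
  qed
qed

lemma simplicial_complex_edge_sub:
  assumes K: "simplicial_complex K" and "card \<eta> = 2"
  shows "simplicial_complex (edge_sub \<eta> e K)"
proof -
  have "\<eta> \<noteq> {}" using assms(2) by auto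
  note sub_eq = edge_sub_alt[OF this, of e K]
  have "\<sigma>' \<in> edge_sub \<eta> e K" if "\<sigma> \<in> edge_sub \<eta> e K" "\<sigma>' \<subseteq> \<sigma>" for \<sigma> \<sigma>'
  proof -
    from that(1) consider "\<sigma> \<in> K" "\<not> \<eta> \<subseteq> \<sigma>"
      | \<tau> \<rho> p where "\<sigma> = \<tau> \<union> \<rho>" "\<tau> \<in> link K \<eta>" "e \<in> \<rho>" "p \<in> \<eta>" "\<rho> \<subseteq> {p, e}"
      unfolding sub_eq by blast
    then show ?thesis
    proof cases
      case 1
      then show ?thesis
        using that(2) simplicial_complex_downward_closed[OF K] unfolding sub_eq by blast
    qed (use subset_of_new_face_in_edge_sub[OF K assms(2)] that(2) in blast)
  qed
  moreover have "finite (edge_sub \<eta> e K)"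
  proof -
    have "{\<rho>. \<rho> = {e} \<or> (\<exists>s\<in>\<eta>. \<rho> = {s, e})} = insert {e} ((\<lambda>s. {s, e}) ` \<eta>)"
      by auto
    moreover have "finite \<eta>"
      using assms(2) card.infinite by force
    ultimately have "finite {\<rho>. \<rho> = {e} \<or> (\<exists>s\<in>\<eta>. \<rho> = {s, e})}"
      by simp
    moreover have "finite (link K \<eta>)"
      using K unfolding simplicial_complex_def link_def by simp
    ultimately show ?thesis
      using K unfolding edge_sub_def simplicial_complex_def
      by (intro finite_UnI finite_image_set2) simp_all
  qed
  moreover have "{} \<in> edge_sub \<eta> e K"
    using K \<open>\<eta> \<noteq> {}\<close> unfolding edge_sub_def simplicial_complex_def by blast
  moreover have "\<forall>\<sigma>\<in>edge_sub \<eta> e K. finite \<sigma>"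
    using K unfolding edge_sub_def simplicial_complex_def link_def by blast
  ultimately show ?thesis
    unfolding simplicial_complex_def by blast
qed

lemma vertices_edge_sub:
  assumes "\<eta> \<in> K"
  shows "vertices (edge_sub \<eta> e K) \<subseteq> insert e (vertices K)"
  using assms unfolding edge_sub_def vertices_def link_def by blast

lemma link_edge_sub_new_edge:
  assumes "\<eta> \<in> K" "card \<eta> = 2" "e \<notin> vertices K" "p \<in> \<eta>"
  shows "link (edge_sub \<eta> e K) {p, e} = link K \<eta>"
proof (intro equalityI subsetI)
  have "\<eta> \<noteq> {}" using assms(2) by auto
  note sub_eq = edge_sub_alt[OF this, of e K]
  have e_notin: "e \<notin> \<sigma>" if "\<sigma> \<in> K" for \<sigma>
    using notin_face_if_notin_vertices[OF assms(3) that] .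
  have "p \<noteq> e" using e_notin[OF assms(1)] assms(4) by blast
  {
    fix \<tau> assume "\<tau> \<in> link (edge_sub \<eta> e K) {p, e}"
    then have "{p, e} \<union> \<tau> \<in> edge_sub \<eta> e K" "{p, e} \<inter> \<tau> = {}"
      unfolding link_def by auto
    moreover have "{p, e} \<union> \<tau> \<notin> K" using e_notin by blast
    ultimately obtain \<tau>\<^sub>0 \<rho> q where "{p, e} \<union> \<tau> = \<tau>\<^sub>0 \<union> \<rho>" "\<tau>\<^sub>0 \<in> link K \<eta>" "q \<in> \<eta>" "\<rho> \<subseteq> {q, e}"
      unfolding sub_eq by blast
    moreover from this have "\<tau>\<^sub>0 \<inter> insert e \<eta> = {}"
      using e_notin unfolding link_def by auto
    moreover have "p \<in> \<rho>"
      using calculation assms(4) by blast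
    ultimately have "\<rho> \<subseteq> {p, e}"
      using \<open>p \<noteq> e\<close> by blast
    moreover have "\<tau>\<^sub>0 \<inter> {p, e} = {}"
      using \<open>\<tau>\<^sub>0 \<inter> insert e \<eta> = {}\<close> assms(4) by blast
    ultimately have "\<tau>\<^sub>0 = ({p, e} \<union> \<tau>) - {p, e}"
      unfolding \<open>{p, e} \<union> \<tau> = \<tau>\<^sub>0 \<union> \<rho>\<close> by blast
    then have "\<tau> = \<tau>\<^sub>0"
      using \<open>{p, e} \<inter> \<tau> = {}\<close> by blast
    with \<open>\<tau>\<^sub>0 \<in> link K \<eta>\<close> show "\<tau> \<in> link K \<eta>" by simp
  }
  {
    fix \<tau> assume \<tau>: "\<tau> \<in> link K \<eta>"
    then have "\<tau> \<inter> insert e \<eta> = {}" "\<tau> \<in> K"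
      using e_notin unfolding link_def by auto
    then have "\<tau> \<in> edge_sub \<eta> e K"
      using \<open>\<eta> \<noteq> {}\<close> unfolding sub_eq by blast
    moreover have "{p, e} \<union> \<tau> \<in> edge_sub \<eta> e K"
      using \<tau> assms(4) unfolding sub_eq by blast
    moreover have "{p, e} \<inter> \<tau> = {}"
      using \<open>\<tau> \<inter> insert e \<eta> = {}\<close> assms(4) by blast
    ultimately show "\<tau> \<in> link (edge_sub \<eta> e K) {p, e}"
      unfolding link_def by blast
  }
qed

section \<open>The h-polynomial of iterated edge subdivisions\<close>

lemma edge_sub_eq_disjoint_parts:
  "edge_sub {s, t} e K = {\<sigma> \<in> K. \<not> {s, t} \<subseteq> \<sigma>}
    \<union> (\<lambda>\<tau>. \<tau> \<union> {e}) ` link K {s, t}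
    \<union> (\<lambda>\<tau>. \<tau> \<union> {s, e}) ` link K {s, t}
    \<union> (\<lambda>\<tau>. \<tau> \<union> {t, e}) ` link K {s, t}"
  unfolding edge_sub_def by blast

lemma sum_card_image_union:
  assumes "finite \<rho>" "\<And>\<tau>. \<tau> \<in> L \<Longrightarrow> finite \<tau> \<and> \<tau> \<inter> \<rho> = {}"
  shows "(\<Sum>\<sigma>\<in>(\<lambda>\<tau>. \<tau> \<union> \<rho>) ` L. g (card \<sigma>)) = (\<Sum>\<tau>\<in>L. g (card \<tau> + card \<rho>))"
proof -
  have "inj_on (\<lambda>\<tau>. \<tau> \<union> \<rho>) L"
  proof (rule inj_onI)
    fix \<tau> \<tau>' assume "\<tau> \<in> L" "\<tau>' \<in> L" "\<tau> \<union> \<rho> = \<tau>' \<union> \<rho>"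
    then have "(\<tau> \<union> \<rho>) - \<rho> = (\<tau>' \<union> \<rho>) - \<rho>" by simp
    with assms(2)[OF \<open>\<tau> \<in> L\<close>] assms(2)[OF \<open>\<tau>' \<in> L\<close>] show "\<tau> = \<tau>'" by blast
  qed
  then show ?thesis
    using assms by (simp add: sum.reindex card_Un_disjoint)
qed

definition h_term :: "nat \<Rightarrow> nat \<Rightarrow> real poly" where
  "h_term N j = Polynomial.monom 1 j * [:1, -1:] ^ (N - j)"

definition sub_h_increment :: "nat \<Rightarrow> 'a set set \<Rightarrow> real poly" where
  "sub_h_increment N L = (\<Sum>\<tau>\<in>L. h_term N (card \<tau> + 1) + h_term N (card \<tau> + 2))"

lemma h_poly_eq_sum_h_term: "h_poly N K = (\<Sum>\<sigma>\<in>K. h_term N (card \<sigma>))"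
  unfolding h_poly_def h_term_def ..

lemma h_poly_edge_sub:
  assumes K: "simplicial_complex K" and "\<eta> \<in> K" "card \<eta> = 2" "e \<notin> vertices K"
  shows "h_poly N (edge_sub \<eta> e K) = h_poly N K + sub_h_increment N (link K \<eta>)"
proof -
  obtain s t where st: "\<eta> = {s, t}" "s \<noteq> t" using assms(3) card_2_iff by metis
  let ?L = "link K \<eta>" and ?A = "{\<sigma> \<in> K. \<not> \<eta> \<subseteq> \<sigma>}" and ?h = "\<lambda>\<sigma>. h_term N (card \<sigma>)"
  have "e \<notin> \<eta>" using notin_face_if_notin_vertices[OF assms(4,2)] .
  then have "s \<noteq> e" "t \<noteq> e" using st by auto
  have e_notin_A: "e \<notin> \<sigma>" if "\<sigma> \<in> ?A" for \<sigma>
    using notin_face_if_notin_vertices[OF assms(4)] that by blast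
  have link_face: "finite \<tau> \<and> \<tau> \<inter> insert e \<eta> = {}" if "\<tau> \<in> ?L" for \<tau>
    using that K notin_face_if_notin_vertices[OF assms(4)] unfolding link_def simplicial_complex_def
    by auto
  have finite: "finite K" "finite ?L" "finite ?A"
    using K unfolding simplicial_complex_def link_def by simp_all
  have "h_poly N (edge_sub \<eta> e K) = sum ?h ?A + sum ?h ((\<lambda>\<tau>. \<tau> \<union> {e}) ` ?L)
      + sum ?h ((\<lambda>\<tau>. \<tau> \<union> {s, e}) ` ?L) + sum ?h ((\<lambda>\<tau>. \<tau> \<union> {t, e}) ` ?L)"
  proof -
    have "?A \<inter> (\<lambda>\<tau>. \<tau> \<union> {e}) ` ?L = {}"
      using e_notin_A by blast
    moreover have "(?A \<union> (\<lambda>\<tau>. \<tau> \<union> {e}) ` ?L) \<inter> (\<lambda>\<tau>. \<tau> \<union> {s, e}) ` ?L = {}"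
      using e_notin_A link_face st \<open>s \<noteq> e\<close> by fastforce
    moreover have "(?A \<union> (\<lambda>\<tau>. \<tau> \<union> {e}) ` ?L \<union> (\<lambda>\<tau>. \<tau> \<union> {s, e}) ` ?L)
        \<inter> (\<lambda>\<tau>. \<tau> \<union> {t, e}) ` ?L = {}"
      using e_notin_A link_face st \<open>s \<noteq> e\<close> \<open>t \<noteq> e\<close> by fastforce
    ultimately show ?thesis
      unfolding h_poly_eq_sum_h_term edge_sub_eq_disjoint_parts[of s t, folded st(1)]
      using finite by (simp add: sum.union_disjoint)
  qed
  (* \<tau> \<union> {t, e} has as many vertices as the face \<tau> \<union> \<eta> it replaces *)
  also have "\<dots> = sum ?h ?A + sum ?h ((\<lambda>\<tau>. \<tau> \<union> \<eta>) ` ?L) + sub_h_increment N ?L"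
    using link_face st \<open>s \<noteq> e\<close> \<open>t \<noteq> e\<close>
    by (subst (1 2 3 4) sum_card_image_union) (auto simp: sub_h_increment_def sum.distrib)
  also have "sum ?h ?A + sum ?h ((\<lambda>\<tau>. \<tau> \<union> \<eta>) ` ?L) = h_poly N K"
    unfolding h_poly_eq_sum_h_term faces_containing_eq_image_link[OF K, symmetric]
    using finite by (subst sum.union_disjoint[symmetric]) (auto intro: sum.cong)
  finally show ?thesis .
qed

lemma multi_sub_data_fresh:
  assumes "multi_sub_data X \<eta> m ed e" "k < m"
  shows "e k \<notin> vertices X \<union> e ` {..<k}"
proof -
  have "inj_on e {..<m}" "e ` {..<m} \<inter> vertices X = {}"
    using assms(1) unfolding multi_sub_data_def by auto
  with assms(2) show ?thesis
    by (auto dest: inj_onD)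
qed

lemma sub_iter_invariant:
  assumes X: "simplicial_complex X" "\<eta> \<in> X" "card \<eta> = 2"
    and data: "multi_sub_data X \<eta> m ed e"
  shows "k \<le> m \<Longrightarrow> simplicial_complex (sub_iter ed e k X)
    \<and> vertices (sub_iter ed e k X) \<subseteq> vertices X \<union> e ` {..<k}
    \<and> (k < m \<longrightarrow> ed k \<in> sub_iter ed e k X \<and> card (ed k) = 2
          \<and> link (sub_iter ed e k X) (ed k) = link X \<eta> \<and> e k \<notin> vertices (sub_iter ed e k X))"
proof (induction k)
  case 0
  then show ?case
    using X data multi_sub_data_fresh[OF data, of 0] by (simp add: multi_sub_data_def)
next
  case (Suc k)
  let ?K = "sub_iter ed e k X" and ?K' = "sub_iter ed e (Suc k) X"
  from Suc have K: "simplicial_complex ?K" "vertices ?K \<subseteq> vertices X \<union> e ` {..<k}"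
    and edge: "ed k \<in> ?K" "card (ed k) = 2" "link ?K (ed k) = link X \<eta>" "e k \<notin> vertices ?K"
    by auto
  have vertices: "vertices ?K' \<subseteq> vertices X \<union> e ` {..<Suc k}"
    using vertices_edge_sub[OF edge(1), of "e k"] K(2) by (auto simp: lessThan_Suc)
  moreover have "ed (Suc k) \<in> ?K' \<and> card (ed (Suc k)) = 2 \<and> link ?K' (ed (Suc k)) = link X \<eta>
      \<and> e (Suc k) \<notin> vertices ?K'" if "Suc k < m"
  proof -
    obtain p where p: "p \<in> ed k" "ed (Suc k) = {p, e k}"
      using data \<open>Suc k < m\<close> unfolding multi_sub_data_def by (auto simp: insert_commute)
    have "link ?K' (ed (Suc k)) = link X \<eta>"
      using link_edge_sub_new_edge[OF edge(1,2,4) p(1)] edge(3) p(2) by simp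
    moreover have "{} \<in> link X \<eta>"
      using X unfolding link_def simplicial_complex_def by simp
    moreover have "p \<noteq> e k"
      using notin_face_if_notin_vertices[OF edge(4,1)] p(1) by blast
    moreover have "e (Suc k) \<notin> vertices ?K'"
      using vertices multi_sub_data_fresh[OF data \<open>Suc k < m\<close>] by blast
    ultimately show ?thesis
      using p(2) face_if_empty_in_link[of ?K'] by auto
  qed
  ultimately show ?case
    using simplicial_complex_edge_sub[OF K(1) edge(2)] by simp
qed

lemma h_poly_sub_iter:
  assumes "simplicial_complex X" "\<eta> \<in> X" "card \<eta> = 2" "multi_sub_data X \<eta> m ed e"
  shows "h_poly N (sub_iter ed e m X)
    = h_poly N X + Polynomial.smult (real m) (sub_h_increment N (link X \<eta>))"
proof -
  have "h_poly N (sub_iter ed e k X)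
      = h_poly N X + Polynomial.smult (real k) (sub_h_increment N (link X \<eta>))" if "k \<le> m" for k
    using that
  proof (induction k)
    case (Suc k)
    with sub_iter_invariant[OF assms, of k] show ?case
      by (simp add: h_poly_edge_sub smult_add_left algebra_simps)
  qed simp
  then show ?thesis by simp
qed

section \<open>Cross-polytopes\<close>

lemma cross_Suc_eq [simp]:
  "cross a b (Suc n)
    = cross a b n \<union> (\<lambda>\<tau>. \<tau> \<union> {a n}) ` cross a b n \<union> (\<lambda>\<tau>. \<tau> \<union> {b n}) ` cross a b n"
  unfolding cross.simps Defs.join_def by auto

declare cross.simps(2) [simp del]

lemma cross_face_subset: "\<tau> \<in> cross a b n \<Longrightarrow> \<tau> \<subseteq> a ` {..<n} \<union> b ` {..<n}"
  by (induction n arbitrary: \<tau>) (auto simp: lessThan_Suc)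

lemma finite_cross_face: "\<tau> \<in> cross a b n \<Longrightarrow> finite \<tau>"
  by (rule finite_subset[OF cross_face_subset]) simp_all

lemma finite_cross: "finite (cross a b n)"
  by (induction n) simp_all

lemma card_cross_face_le: "\<tau> \<in> cross a b n \<Longrightarrow> card \<tau> \<le> n"
proof (induction n arbitrary: \<tau>)
  case (Suc n)
  from Suc.prems consider "\<tau> \<in> cross a b n" | \<tau>\<^sub>0 x where "\<tau>\<^sub>0 \<in> cross a b n" "\<tau> = \<tau>\<^sub>0 \<union> {x}"
    unfolding cross_Suc_eq by blast
  then show ?case
  proof cases
    case (2 \<tau>\<^sub>0 x)
    then have "card \<tau> \<le> card \<tau>\<^sub>0 + card {x}"
      using card_Un_le by blast
    with Suc.IH[OF 2(1)] show ?thesis by simp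
  qed (simp add: Suc.IH le_SucI)
qed simp

lemma image_prefix_in_cross: "j \<le> n \<Longrightarrow> a ` {..<j} \<in> cross a b n"
proof (induction n arbitrary: j)
  case (Suc n)
  then show ?case
    by (cases "j = Suc n") (auto simp: lessThan_Suc le_Suc_eq)
qed simp

lemma h_poly_cross:
  assumes "inj_on a {..<n}" "inj_on b {..<n}" "a ` {..<n} \<inter> b ` {..<n} = {}"
  shows "h_poly n (cross a b n) = [:1, 1:] ^ n"
  using assms
proof (induction n)
  case 0
  then show ?case by (simp add: h_poly_def)
next
  case (Suc n)
  let ?C = "cross a b n"
  have fresh: "\<tau> \<inter> {a n} = {} \<and> \<tau> \<inter> {b n} = {}" if "\<tau> \<in> ?C" for \<tau>
    using cross_face_subset[OF that] Suc.prems by (auto simp: lessThan_Suc inj_on_def)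
  have "a n \<noteq> b n" using Suc.prems(3) by auto
  with fresh have disjoint: "?C \<inter> (\<lambda>\<tau>. \<tau> \<union> {a n}) ` ?C = {}"
      "(?C \<union> (\<lambda>\<tau>. \<tau> \<union> {a n}) ` ?C) \<inter> (\<lambda>\<tau>. \<tau> \<union> {b n}) ` ?C = {}"
    by fastforce+
  have step: "h_term (Suc n) c + h_term (Suc n) (c + 1) + h_term (Suc n) (c + 1)
      = [:1, 1:] * h_term n c" if "c \<le> n" for c
  proof -
    have "Suc n - c = Suc (n - c)" "Suc n - (c + 1) = n - c" using that by simp_all
    then show ?thesis by (simp add: h_term_def monom_Suc algebra_simps)
  qed
  let ?h = "\<lambda>\<sigma>. h_term (Suc n) (card \<sigma>)"
  have "h_poly (Suc n) (cross a b (Suc n))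
      = sum ?h ?C + sum ?h ((\<lambda>\<tau>. \<tau> \<union> {a n}) ` ?C) + sum ?h ((\<lambda>\<tau>. \<tau> \<union> {b n}) ` ?C)"
    unfolding h_poly_eq_sum_h_term cross_Suc_eq
    by (simp only: sum.union_disjoint[OF _ _ disjoint(2)] sum.union_disjoint[OF _ _ disjoint(1)]
        finite_UnI finite_imageI finite_cross)
  also have "\<dots> = (\<Sum>\<tau>\<in>?C. h_term (Suc n) (card \<tau>) + h_term (Suc n) (card \<tau> + 1)
      + h_term (Suc n) (card \<tau> + 1))"
    using fresh finite_cross_face
    by (subst (1 2) sum_card_image_union) (auto simp: sum.distrib sum_distrib_left)
  also have "\<dots> = [:1, 1:] * h_poly n ?C"
    unfolding h_poly_eq_sum_h_term sum_distrib_left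
    by (rule sum.cong[OF refl], rule step, erule card_cross_face_le)
  also have "h_poly n ?C = [:1, 1:] ^ n"
  proof (rule Suc.IH)
    show "inj_on a {..<n}" "inj_on b {..<n}"
      using Suc.prems(1,2) by (simp_all add: lessThan_Suc)
    show "a ` {..<n} \<inter> b ` {..<n} = {}"
      using Suc.prems(3) by (auto simp: lessThan_Suc)
  qed
  finally show ?case by simp
qed

lemma sub_h_increment_eq:
  assumes "\<And>\<tau>. \<tau> \<in> L \<Longrightarrow> card \<tau> \<le> n"
  shows "sub_h_increment (n + 2) L = [:0, 1:] * h_poly n L"
  unfolding sub_h_increment_def h_poly_eq_sum_h_term sum_distrib_left
proof (rule sum.cong)
  fix \<tau> assume "\<tau> \<in> L"
  then have "n + 2 - (card \<tau> + 1) = Suc (n - card \<tau>)" "n + 2 - (card \<tau> + 2) = n - card \<tau>"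
    using assms[OF \<open>\<tau> \<in> L\<close>] by simp_all
  then show "h_term (n + 2) (card \<tau> + 1) + h_term (n + 2) (card \<tau> + 2)
      = [:0, 1:] * h_term n (card \<tau>)"
    by (simp add: h_term_def monom_Suc algebra_simps)
qed simp

section \<open>Faces of triangulated spheres\<close>

lemma continuous_map_into_Euclidean_space:
  assumes "\<And>i. continuous_map X euclideanreal (\<lambda>x. f x i)"
    and "\<And>x i. x \<in> topspace X \<Longrightarrow> n \<le> i \<Longrightarrow> f x i = 0"
  shows "continuous_map X (Euclidean_space n) f"
  using assms unfolding Euclidean_space_def
  by (auto simp: continuous_map_in_subtopology continuous_map_componentwise_UNIV)

lemma continuous_map_Euclidean_space_coordinate:
  "continuous_map (subtopology (Euclidean_space n) S) euclideanreal (\<lambda>x. x i)"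
  unfolding Euclidean_space_def subtopology_subtopology
  by (rule continuous_map_from_subtopology[OF continuous_map_product_projection]) simp

lemma openin_Euclidean_space_line:
  assumes S: "openin (Euclidean_space n) S" and "p \<in> S" and v: "v \<in> topspace (Euclidean_space n)"
  obtains \<epsilon> :: real where "\<epsilon> > 0" "\<And>t. \<bar>t\<bar> < \<epsilon> \<Longrightarrow> (\<lambda>i. p i + t * v i) \<in> S"
proof -
  define c where "c t = (\<lambda>i. p i + t * v i)" for t :: real
  have "p \<in> topspace (Euclidean_space n)"
    using openin_subset[OF S] \<open>p \<in> S\<close> by blast
  with v have "continuous_map euclideanreal (Euclidean_space n) c"
    unfolding c_def
    by (intro continuous_map_into_Euclidean_space continuous_intros) (auto simp: topspace_Euclidean_space)
  then have "openin euclideanreal {t \<in> topspace euclideanreal. c t \<in> S}"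
    using S by (rule openin_continuous_map_preimage)
  then have "open {t. c t \<in> S}"
    by simp
  moreover have "c 0 \<in> S"
    using \<open>p \<in> S\<close> by (simp add: c_def)
  ultimately obtain \<epsilon> where "\<epsilon> > 0" and ball: "ball 0 \<epsilon> \<subseteq> {t. c t \<in> S}"
    by (metis mem_Collect_eq open_contains_ball)
  show ?thesis
  proof (rule that[OF \<open>\<epsilon> > 0\<close>])
    fix t :: real assume "\<bar>t\<bar> < \<epsilon>"
    then have "t \<in> ball 0 \<epsilon>" by (simp add: dist_real_def)
    with ball show "(\<lambda>i. p i + t * v i) \<in> S" by (auto simp: c_def)
  qed
qed

lemma Euclidean_space_dim_le_if_open_injective:
  assumes U: "openin (Euclidean_space m) U" "U \<noteq> {}"
    and f: "continuous_map (subtopology (Euclidean_space m) U) (Euclidean_space n) f" "inj_on f U"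
  shows "m \<le> n"
proof (rule ccontr)
  assume "\<not> m \<le> n"
  (* then f ` U would be an open subset of R^m inside the hyperplane x_(m-1) = 0 *)
  then have "Euclidean_space n = subtopology (Euclidean_space m) (topspace (Euclidean_space n))"
    by (metis Euclidean_space_def inf.absorb_iff2 nat_le_linear subset_Euclidean_space
        subtopology_subtopology topspace_Euclidean_space)
  with f(1) have "continuous_map (subtopology (Euclidean_space m) U) (Euclidean_space m) f"
    by (metis continuous_map_in_subtopology)
  then have "openin (Euclidean_space m) (f ` U)"
    using invariance_of_domain_Euclidean_space U(1) f(2) by blast
  moreover obtain p where "p \<in> f ` U" using U(2) by blast
  moreover have "(\<lambda>i. if i = m - 1 then 1 else 0) \<in> topspace (Euclidean_space m)"
    using \<open>\<not> m \<le> n\<close> by (auto simp: topspace_Euclidean_space)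
  ultimately obtain \<epsilon> :: real where "\<epsilon> > 0"
    and line: "\<And>t. \<bar>t\<bar> < \<epsilon> \<Longrightarrow> (\<lambda>i. p i + t * (if i = m - 1 then 1 else 0)) \<in> f ` U"
    by (rule openin_Euclidean_space_line) blast
  have "f ` U \<subseteq> topspace (Euclidean_space n)"
    using continuous_map_image_subset_topspace[OF f(1)] openin_subset[OF U(1)] by auto
  then have "q (m - 1) = 0" if "q \<in> f ` U" for q
    using that \<open>\<not> m \<le> n\<close> by (auto simp: topspace_Euclidean_space)
  from this[OF line[of "\<epsilon> / 2"]] this[OF \<open>p \<in> f ` U\<close>] \<open>\<epsilon> > 0\<close> show False
    by simp
qed

lemma openin_Euclidean_space_subset_nsphere_empty:
  assumes S: "openin (Euclidean_space (Suc d)) S" and "S \<subseteq> topspace (nsphere d)"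
  shows "S = {}"
proof (rule ccontr)
  assume "S \<noteq> {}"
  then obtain p where "p \<in> S" by blast
  then have "p \<in> topspace (Euclidean_space (Suc d))"
    using openin_subset[OF S] by blast
  with S \<open>p \<in> S\<close> obtain \<epsilon> :: real
    where "\<epsilon> > 0" and line: "\<And>t. \<bar>t\<bar> < \<epsilon> \<Longrightarrow> (\<lambda>i. p i + t * p i) \<in> S"
    by (rule openin_Euclidean_space_line) blast
  have on_sphere: "(\<Sum>i\<le>d. x i ^ 2) = 1" if "x \<in> S" for x
    using assms(2) that by (auto simp: nsphere_def)
  let ?t = "\<epsilon> / 2"
  have "(p i + ?t * p i) ^ 2 = (1 + ?t) ^ 2 * p i ^ 2" for i
    by (simp add: power_mult_distrib[symmetric] algebra_simps)
  then have "(\<Sum>i\<le>d. (p i + ?t * p i) ^ 2) = (1 + ?t) ^ 2 * (\<Sum>i\<le>d. p i ^ 2)"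
    by (simp add: sum_distrib_left)
  with on_sphere[OF line[of ?t]] on_sphere[OF \<open>p \<in> S\<close>] \<open>\<epsilon> > 0\<close> have "(1 + ?t) ^ 2 = 1"
    by simp
  moreover have "(1 + ?t) ^ 2 > 1"
    using \<open>\<epsilon> > 0\<close> by (simp add: one_less_power)
  ultimately show False by simp
qed

lemma normalize_into_nsphere:
  fixes d :: nat and N :: "(nat \<Rightarrow> real) \<Rightarrow> real"
  defines "N z \<equiv> \<Sum>i\<le>d. z i ^ 2"
  shows "openin (Euclidean_space (Suc d)) {z \<in> topspace (Euclidean_space (Suc d)). N z > 0}"
    and "continuous_map
      (subtopology (Euclidean_space (Suc d)) {z \<in> topspace (Euclidean_space (Suc d)). N z > 0})
      (nsphere d) (\<lambda>z i. z i / sqrt (N z))"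
proof -
  let ?E = "Euclidean_space (Suc d)" and ?P = "{z \<in> topspace (Euclidean_space (Suc d)). N z > 0}"
  have N_cont: "continuous_map (subtopology ?E S) euclideanreal N" for S
    unfolding N_def
    by (intro continuous_map_sum continuous_map_real_pow continuous_map_Euclidean_space_coordinate) simp
  show "openin ?E ?P"
    using openin_continuous_map_preimage[OF N_cont[of "topspace ?E"], of "{0<..}"] by simp
  show "continuous_map (subtopology ?E ?P) (nsphere d) (\<lambda>z i. z i / sqrt (N z))"
    unfolding nsphere_def continuous_map_in_subtopology
  proof
    show "continuous_map (subtopology ?E ?P) ?E (\<lambda>z i. z i / sqrt (N z))"
      by (intro continuous_map_into_Euclidean_space continuous_map_real_divide continuous_map_sqrt
          N_cont continuous_map_Euclidean_space_coordinate) (auto simp: topspace_Euclidean_space)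
    have "(\<Sum>i\<le>d. (z i / sqrt (N z)) ^ 2) = 1" if "N z > 0" for z
      using that by (simp add: power_divide sum_divide_distrib[symmetric] flip: N_def)
    then show "(\<lambda>z i. z i / sqrt (N z))
        \<in> topspace (subtopology ?E ?P) \<rightarrow> {x. (\<Sum>i\<le>d. x i ^ 2) = 1}"
      by auto
  qed
qed

lemma cone_over_open_subset_of_nsphere:
  fixes d :: nat and T C :: "(nat \<Rightarrow> real) set"
    and N :: "(nat \<Rightarrow> real) \<Rightarrow> real" and nrm :: "(nat \<Rightarrow> real) \<Rightarrow> nat \<Rightarrow> real"
  defines "N z \<equiv> \<Sum>i\<le>d. z i ^ 2"
    and "nrm z \<equiv> \<lambda>i. z i / sqrt (N z)"
    and "C \<equiv> {z \<in> topspace (Euclidean_space (Suc d)). N z > 0 \<and> nrm z \<in> T}"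
  assumes T: "openin (nsphere d) T" "T \<noteq> {}"
  shows "openin (Euclidean_space (Suc d)) C" "C \<noteq> {}"
    and "continuous_map (subtopology (Euclidean_space (Suc d)) C) (subtopology (nsphere d) T) nrm"
proof -
  let ?E = "Euclidean_space (Suc d)" and ?P = "{z \<in> topspace (Euclidean_space (Suc d)). N z > 0}"
  have P: "openin ?E ?P" "continuous_map (subtopology ?E ?P) (nsphere d) nrm"
    unfolding nrm_def N_def by (rule normalize_into_nsphere)+
  have C_eq: "C = {z \<in> topspace (subtopology ?E ?P). nrm z \<in> T}"
    by (auto simp: C_def)
  show "openin ?E C"
    unfolding C_eq by (rule openin_trans_full[OF openin_continuous_map_preimage[OF P(2) T(1)] P(1)])
  obtain q where "q \<in> T" using T(2) by blast
  then have "q \<in> topspace ?E" "N q = 1"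
    using openin_subset[OF T(1)] by (auto simp: nsphere_def N_def)
  with \<open>q \<in> T\<close> have "q \<in> C"
    by (simp add: C_def nrm_def)
  then show "C \<noteq> {}" by blast
  have "subtopology ?E C = subtopology (subtopology ?E ?P) C"
    by (auto simp: C_def subtopology_subtopology intro!: arg_cong[where f = "subtopology ?E"])
  then show "continuous_map (subtopology ?E C) (subtopology (nsphere d) T) nrm"
    using continuous_map_from_subtopology[OF P(2), of C]
    by (auto simp: continuous_map_in_subtopology C_def)
qed

lemma nsphere_dim_le_if_open_injective:
  assumes T: "openin (nsphere d) T" "T \<noteq> {}"
    and h: "continuous_map (subtopology (nsphere d) T) (Euclidean_space k) h" "inj_on h T"
  shows "d \<le> k"
proof -
  let ?E = "Euclidean_space (Suc d)"
  define N where "N z = (\<Sum>i\<le>d. z i ^ 2)" for z :: "nat \<Rightarrow> real"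
  define nrm where "nrm z = (\<lambda>i. z i / sqrt (N z))" for z
  define C where "C = {z \<in> topspace ?E. N z > 0 \<and> nrm z \<in> T}"
  (* Keeping the radius as an extra coordinate embeds the cone over T into R^(k+1). *)
  define \<Psi> where "\<Psi> z = (h (nrm z))(k := sqrt (N z))" for z
  have cone: "openin ?E C" "C \<noteq> {}"
    "continuous_map (subtopology ?E C) (subtopology (nsphere d) T) nrm"
    unfolding C_def nrm_def N_def by (rule cone_over_open_subset_of_nsphere[OF T])+
  have h_nrm: "h (nrm z) \<in> topspace (Euclidean_space k)" if "z \<in> C" for z
    using continuous_map_image_subset_topspace[OF h(1)] that openin_subset[OF T(1)]
    by (auto simp: C_def)
  have "continuous_map (subtopology ?E C) (Euclidean_space (Suc k)) \<Psi>"
  proof -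
    have "continuous_map (subtopology ?E C) (Euclidean_space k) (h \<circ> nrm)"
      by (rule continuous_map_compose[OF cone(3) h(1)])
    then have "continuous_map (subtopology ?E C) euclideanreal (\<lambda>z. h (nrm z) i)" for i
      using continuous_map_compose
        continuous_map_Euclidean_space_coordinate[of k "topspace (Euclidean_space k)" i]
      by (fastforce simp: o_def)
    moreover have "continuous_map (subtopology ?E C) euclideanreal (\<lambda>z. sqrt (N z))"
      unfolding N_def
      by (intro continuous_map_sqrt continuous_map_sum continuous_map_real_pow
          continuous_map_Euclidean_space_coordinate) simp
    ultimately show ?thesis
      using h_nrm unfolding \<Psi>_def
      by (intro continuous_map_into_Euclidean_space) (auto simp: topspace_Euclidean_space)
  qed
  moreover have "inj_on \<Psi> C"
  proof (rule inj_onI)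
    fix z z' assume "z \<in> C" "z' \<in> C" "\<Psi> z = \<Psi> z'"
    then have "sqrt (N z) = sqrt (N z')"
      unfolding \<Psi>_def by (metis fun_upd_same)
    then have N_eq: "N z = N z'" by simp
    have "h (nrm z) = h (nrm z')"
    proof
      fix i
      show "h (nrm z) i = h (nrm z') i"
      proof (cases "i = k")
        case True
        with h_nrm[OF \<open>z \<in> C\<close>] h_nrm[OF \<open>z' \<in> C\<close>] show ?thesis
          by (simp add: topspace_Euclidean_space)
      next
        case False
        with fun_cong[OF \<open>\<Psi> z = \<Psi> z'\<close>, of i] show ?thesis by (simp add: \<Psi>_def)
      qed
    qed
    then have "nrm z = nrm z'"
      using h(2) \<open>z \<in> C\<close> \<open>z' \<in> C\<close> by (auto simp: C_def dest: inj_onD)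
    moreover have "N z > 0" using \<open>z \<in> C\<close> by (simp add: C_def)
    ultimately show "z = z'"
      using N_eq by (auto simp: fun_eq_iff nrm_def)
  qed
  ultimately have "Suc d \<le> Suc k"
    using cone(1,2) by (intro Euclidean_space_dim_le_if_open_injective)
  then show ?thesis by simp
qed

lemma topspace_realization:
  "topspace (realization X) = {x. (\<forall>v. 0 \<le> x v) \<and> {v. x v \<noteq> 0} \<in> X \<and> sum x {v. x v \<noteq> 0} = 1}"
  unfolding realization_def by simp

lemma continuous_map_realization_coordinate:
  "continuous_map (subtopology (realization X) S) euclideanreal (\<lambda>x. x v)"
  unfolding realization_def subtopology_subtopology
  by (rule continuous_map_from_subtopology[OF continuous_map_product_projection]) simp

lemma continuous_map_into_realization:
  assumes "\<And>v. continuous_map Y euclideanreal (\<lambda>y. f y v)"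
    and "\<And>y. y \<in> topspace Y \<Longrightarrow> f y \<in> topspace (realization X)"
  shows "continuous_map Y (realization X) f"
  using assms unfolding realization_def
  by (auto simp: continuous_map_in_subtopology continuous_map_componentwise_UNIV)

lemma realization_contains_open_cell:
  assumes "\<sigma> \<in> X" "card \<sigma> = Suc n"
  obtains W \<phi> where "openin (Euclidean_space n) W" "W \<noteq> {}"
    "continuous_map (subtopology (Euclidean_space n) W) (realization X) \<phi>" "inj_on \<phi> W"
proof -
  have "finite \<sigma>" using assms(2) card.infinite by force
  then obtain v where v: "bij_betw v {..<Suc n} \<sigma>"
    using ex_bij_betw_nat_finite[of \<sigma>] assms(2) by (auto simp: atLeast0LessThan)
  define iv where "iv = inv_into {..<Suc n} v"
  have iv: "iv (v i) = i" if "i < Suc n" for i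
    using bij_betw_inv_into_left[OF v] that by (simp add: iv_def)
  have v_iv: "iv w < Suc n" "v (iv w) = w" if "w \<in> \<sigma>" for w
    using bij_betw_inv_into_right[OF v that] bij_betw_apply[OF bij_betw_inv_into[OF v] that]
    by (simp_all add: iv_def)
  have v_in: "v i \<in> \<sigma>" if "i < Suc n" for i
    using bij_betw_apply[OF v] that by simp
  (* W is the interior of the standard n-simplex, and \<phi> maps it onto the open simplex of \<sigma>;
     the last barycentric coordinate is 1 minus the sum of the others. *)
  define bary where "bary y i = (if i < n then y i else 1 - (\<Sum>j<n. y j))"
    for y :: "nat \<Rightarrow> real" and i
  define \<phi> where "\<phi> y w = (if w \<in> \<sigma> then bary y (iv w) else 0)" for y w
  define W where "W = {y \<in> topspace (Euclidean_space n). \<forall>i<Suc n. bary y i \<in> {0<..}}"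
  have bary_cont: "continuous_map (Euclidean_space n) euclideanreal (\<lambda>y. bary y i)" for i
    using continuous_map_Euclidean_space_coordinate[of n "topspace (Euclidean_space n)"]
    unfolding bary_def by (auto intro!: continuous_intros)
  have "W = (\<Inter>i<Suc n. {y \<in> topspace (Euclidean_space n). bary y i \<in> {0<..}})"
    unfolding W_def by blast
  also have "openin (Euclidean_space n) \<dots>"
    by (intro openin_INT2 openin_continuous_map_preimage[OF bary_cont]) auto
  finally have "openin (Euclidean_space n) W" .
  moreover have "(\<lambda>i. if i < n then 1 / Suc n else 0) \<in> W"
    by (simp add: W_def bary_def topspace_Euclidean_space)
  moreover have phi_in: "\<phi> y \<in> topspace (realization X)" if "y \<in> W" for y
  proof -
    have pos: "\<forall>i<Suc n. 0 < bary y i" using that by (simp add: W_def)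
    have "{w. \<phi> y w \<noteq> 0} = \<sigma>"
      using pos v_iv by (force simp: \<phi>_def)
    moreover have "sum (\<phi> y) \<sigma> = (\<Sum>i<Suc n. bary y i)"
      using sum.reindex_bij_betw[OF v, of "\<phi> y"] by (simp add: \<phi>_def v_in iv)
    moreover have "(\<Sum>i<Suc n. bary y i) = 1"
      by (simp add: bary_def)
    moreover have "\<forall>w. 0 \<le> \<phi> y w"
      using pos v_iv by (simp add: \<phi>_def less_imp_le)
    ultimately show ?thesis
      using assms(1) by (simp add: topspace_realization)
  qed
  moreover have "continuous_map (subtopology (Euclidean_space n) W) (realization X) \<phi>"
    using phi_in unfolding \<phi>_def
    by (intro continuous_map_into_realization)
      (auto intro: continuous_map_from_subtopology[OF bary_cont])
  moreover have "inj_on \<phi> W"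
  proof (rule inj_onI)
    fix y y' assume "y \<in> W" "y' \<in> W" "\<phi> y = \<phi> y'"
    show "y = y'"
    proof
      fix i
      show "y i = y' i"
      proof (cases "i < n")
        case True
        with fun_cong[OF \<open>\<phi> y = \<phi> y'\<close>, of "v i"] show ?thesis
          by (simp add: \<phi>_def bary_def v_in iv)
      next
        case False
        with \<open>y \<in> W\<close> \<open>y' \<in> W\<close> show ?thesis
          by (simp add: W_def topspace_Euclidean_space)
      qed
    qed
  qed
  ultimately show ?thesis
    using that by blast
qed

lemma realization_open_star_of_maximal_face:
  assumes "\<rho> \<in> X" "card \<rho> = Suc k"
    and maximal: "\<And>\<rho>'. \<rho>' \<in> X \<Longrightarrow> \<rho> \<subseteq> \<rho>' \<Longrightarrow> \<rho>' = \<rho>"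
  obtains U h where "openin (realization X) U" "U \<noteq> {}"
    "continuous_map (subtopology (realization X) U) (Euclidean_space k) h" "inj_on h U"
proof -
  let ?R = "realization X"
  have "finite \<rho>" "\<rho> \<noteq> {}" using assms(2) card.infinite by force+
  then obtain v where v: "bij_betw v {..<Suc k} \<rho>"
    using ex_bij_betw_nat_finite[of \<rho>] assms(2) by (auto simp: atLeast0LessThan)
  (* By maximality the open star U of \<rho> is the open simplex of \<rho>; its barycentric
     coordinates sum to 1, so the first k of them embed it into R^k. *)
  define U where "U = {x \<in> topspace ?R. \<forall>w\<in>\<rho>. x w \<in> {0<..}}"
  define h where "h x = (\<lambda>i. if i < k then x (v i) else 0)" for x :: "'a \<Rightarrow> real"
  have support: "{w. x w \<noteq> 0} = \<rho>" if "x \<in> U" for x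
  proof -
    have "{w. x w \<noteq> 0} \<in> X"
      using that by (simp add: U_def topspace_realization)
    moreover have "\<rho> \<subseteq> {w. x w \<noteq> 0}"
      using that by (auto simp: U_def)
    ultimately show ?thesis using maximal by blast
  qed
  have sum_one: "(\<Sum>i<Suc k. x (v i)) = 1" if "x \<in> U" for x
    using that support[OF that] sum.reindex_bij_betw[OF v, of x]
    by (simp add: U_def topspace_realization)
  have "U = (\<Inter>w\<in>\<rho>. {x \<in> topspace ?R. x w \<in> {0<..}})"
    unfolding U_def using \<open>\<rho> \<noteq> {}\<close> by blast
  also have "openin ?R \<dots>"
    using \<open>finite \<rho>\<close> \<open>\<rho> \<noteq> {}\<close> continuous_map_realization_coordinate[of X "topspace ?R"]
    by (intro openin_INT2 openin_continuous_map_preimage) auto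
  finally have "openin ?R U" .
  moreover have "(\<lambda>w. if w \<in> \<rho> then 1 / Suc k else 0) \<in> U"
    using assms(1,2) by (simp add: U_def topspace_realization)
  moreover have "continuous_map (subtopology ?R U) (Euclidean_space k) h"
    unfolding h_def
    by (intro continuous_map_into_Euclidean_space) (auto simp: continuous_map_realization_coordinate)
  moreover have "inj_on h U"
  proof (rule inj_onI)
    fix x x' assume "x \<in> U" "x' \<in> U" "h x = h x'"
    have less: "x (v i) = x' (v i)" if "i < k" for i
      using fun_cong[OF \<open>h x = h x'\<close>, of i] that unfolding h_def by simp
    then have "(\<Sum>i<k. x (v i)) = (\<Sum>i<k. x' (v i))" by simp
    with sum_one[OF \<open>x \<in> U\<close>] sum_one[OF \<open>x' \<in> U\<close>] have "x (v k) = x' (v k)"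
      by simp
    with less have on_face: "x (v i) = x' (v i)" if "i < Suc k" for i
      using that less_Suc_eq by auto
    show "x = x'"
    proof
      fix w
      show "x w = x' w"
      proof (cases "w \<in> \<rho>")
        case True
        then obtain i where "i < Suc k" "w = v i"
          using bij_betw_imp_surj_on[OF v] by auto
        with on_face show ?thesis by simp
      next
        case False
        then have "w \<notin> {w. x w \<noteq> 0}" "w \<notin> {w. x' w \<noteq> 0}"
          unfolding support[OF \<open>x \<in> U\<close>] support[OF \<open>x' \<in> U\<close>] by simp_all
        then show ?thesis by simp
      qed
    qed
  qed
  ultimately show ?thesis
    using that by blast
qed

lemma card_face_le_if_sphere:
  assumes X: "simplicial_complex X" and "realization X homeomorphic_space nsphere d"
    and "\<sigma> \<in> X"
  shows "card \<sigma> \<le> Suc d"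
proof (rule ccontr)
  assume "\<not> card \<sigma> \<le> Suc d"
  then obtain \<tau> where "\<tau> \<subseteq> \<sigma>" "card \<tau> = Suc (Suc d)"
    by (meson not_less_eq_eq obtain_subset_with_card_n)
  with X \<open>\<sigma> \<in> X\<close> have "\<tau> \<in> X"
    unfolding simplicial_complex_def by blast
  then obtain W \<phi> where W: "openin (Euclidean_space (Suc d)) W" "W \<noteq> {}"
    and \<phi>: "continuous_map (subtopology (Euclidean_space (Suc d)) W) (realization X) \<phi>"
      "inj_on \<phi> W"
    using \<open>card \<tau> = Suc (Suc d)\<close> by (rule realization_contains_open_cell)
  obtain f where f: "homeomorphic_map (realization X) (nsphere d) f"
    using assms(2) homeomorphic_space by blast
  have "continuous_map (subtopology (Euclidean_space (Suc d)) W) (nsphere d) (f \<circ> \<phi>)"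
    using \<phi>(1) homeomorphic_imp_continuous_map[OF f] by (rule continuous_map_compose)
  then have "continuous_map (subtopology (Euclidean_space (Suc d)) W) (Euclidean_space (Suc d))
      (f \<circ> \<phi>)"
    and sphere: "(f \<circ> \<phi>) ` W \<subseteq> topspace (nsphere d)"
    using openin_subset[OF W(1)] continuous_map_image_subset_topspace
    by (fastforce simp: nsphere_def continuous_map_in_subtopology)+
  moreover have "inj_on (f \<circ> \<phi>) W"
  proof (rule comp_inj_on[OF \<phi>(2)])
    have "\<phi> ` W \<subseteq> topspace (realization X)"
      using continuous_map_image_subset_topspace[OF \<phi>(1)] openin_subset[OF W(1)]
      by (simp add: Int_absorb1)
    then show "inj_on f (\<phi> ` W)"
      using homeomorphic_imp_injective_map[OF f] by (rule inj_on_subset[rotated])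
  qed
  ultimately have "openin (Euclidean_space (Suc d)) ((f \<circ> \<phi>) ` W)"
    using invariance_of_domain_Euclidean_space[OF W(1)] by blast
  then have "(f \<circ> \<phi>) ` W = {}"
    using sphere by (rule openin_Euclidean_space_subset_nsphere_empty)
  with W(2) show False by simp
qed

lemma card_maximal_face_gt_if_sphere:
  assumes X: "simplicial_complex X" and "realization X homeomorphic_space nsphere d"
    and "\<rho> \<in> X" "\<rho> \<noteq> {}" and maximal: "\<And>\<rho>'. \<rho>' \<in> X \<Longrightarrow> \<rho> \<subseteq> \<rho>' \<Longrightarrow> \<rho>' = \<rho>"
  shows "d < card \<rho>"
proof -
  have "finite \<rho>" using X \<open>\<rho> \<in> X\<close> unfolding simplicial_complex_def by blast
  with \<open>\<rho> \<noteq> {}\<close> obtain k where k: "card \<rho> = Suc k"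
    by (metis card_eq_0_iff not0_implies_Suc)
  from \<open>\<rho> \<in> X\<close> k maximal obtain U h where U: "openin (realization X) U" "U \<noteq> {}"
    and h: "continuous_map (subtopology (realization X) U) (Euclidean_space k) h" "inj_on h U"
    by (rule realization_open_star_of_maximal_face)
  obtain g where g: "homeomorphic_map (nsphere d) (realization X) g"
    using assms(2) homeomorphic_space homeomorphic_space_sym by blast
  define T where "T = {y \<in> topspace (nsphere d). g y \<in> U}"
  have "openin (nsphere d) T"
    unfolding T_def using homeomorphic_imp_continuous_map[OF g] U(1)
    by (rule openin_continuous_map_preimage)
  moreover have "T \<noteq> {}"
  proof -
    obtain x where "x \<in> U" using U(2) by blast
    then have "x \<in> g ` topspace (nsphere d)"
      using homeomorphic_imp_surjective_map[OF g] openin_subset[OF U(1)] by blast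
    with \<open>x \<in> U\<close> show ?thesis
      unfolding T_def by blast
  qed
  moreover have "continuous_map (subtopology (nsphere d) T) (Euclidean_space k) (h \<circ> g)"
  proof (rule continuous_map_compose[OF _ h(1)])
    show "continuous_map (subtopology (nsphere d) T) (subtopology (realization X) U) g"
      using continuous_map_from_subtopology[OF homeomorphic_imp_continuous_map[OF g]]
      by (auto simp: continuous_map_in_subtopology T_def)
  qed
  moreover have "inj_on (h \<circ> g) T"
    using h(2) homeomorphic_imp_injective_map[OF g]
    by (auto simp: T_def intro: comp_inj_on inj_on_subset)
  ultimately have "d \<le> k"
    by (rule nsphere_dim_le_if_open_injective)
  with k show ?thesis by simp
qed

lemma cross_polytope_link_dim:
  assumes X: "simplicial_complex X" and sphere: "realization X homeomorphic_space nsphere d"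
    and \<eta>: "\<eta> \<in> X" "card \<eta> = 2"
    and link: "link X \<eta> = cross a b n" and a: "inj_on a {..<n}"
  shows "n + 1 = d"
proof -
  (* If n \<ge> d, then \<eta> \<union> a ` {..<d} is a face with d + 2 vertices; if n + 1 < d, then
     \<eta> \<union> a ` {..<n} is a maximal face with fewer than d + 1 vertices. *)
  have finite: "finite \<eta>" using \<eta>(2) card.infinite by force
  have face: "\<eta> \<union> \<tau> \<in> X" "card (\<eta> \<union> \<tau>) = card \<tau> + 2" if "\<tau> \<in> cross a b n" for \<tau>
    using that finite finite_cross_face[OF that] \<eta>(2) card_Un_disjoint[of \<eta> \<tau>]
    unfolding link[symmetric] link_def by auto
  have "n + 1 \<le> d"
  proof (rule ccontr)
    assume "\<not> n + 1 \<le> d"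
    then have prefix: "a ` {..<d} \<in> cross a b n" "card (a ` {..<d}) = d"
      using image_prefix_in_cross[of d n a b] card_image[OF inj_on_subset[OF a, of "{..<d}"]]
      by auto
    have "card (\<eta> \<union> a ` {..<d}) \<le> Suc d"
      by (rule card_face_le_if_sphere[OF X sphere face(1)[OF prefix(1)]])
    with face(2)[OF prefix(1)] prefix(2) show False by simp
  qed
  moreover have "d \<le> n + 1"
  proof -
    let ?\<rho> = "\<eta> \<union> a ` {..<n}"
    have "a ` {..<n} \<in> cross a b n" "card (a ` {..<n}) = n"
      using image_prefix_in_cross[of n n a b] card_image[OF a] by auto
    then have \<rho>: "?\<rho> \<in> X" "card ?\<rho> = n + 2" "?\<rho> \<noteq> {}"
      using face \<eta>(2) by auto
    have maximal: "\<rho>' = ?\<rho>" if "\<rho>' \<in> X" "?\<rho> \<subseteq> \<rho>'" for \<rho>'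
    proof -
      have "\<rho>' - \<eta> \<in> link X \<eta>"
        using that X simplicial_complex_downward_closed[OF X, of \<rho>' "\<rho>' - \<eta>"]
        unfolding link_def by (auto simp: sup.absorb2)
      then have "card (\<rho>' - \<eta>) \<le> n" "finite (\<rho>' - \<eta>)"
        unfolding link by (auto intro: card_cross_face_le finite_cross_face)
      moreover have "\<eta> \<inter> a ` {..<n} = {}"
        using \<open>a ` {..<n} \<in> cross a b n\<close> unfolding link[symmetric] link_def by blast
      then have "a ` {..<n} \<subseteq> \<rho>' - \<eta>"
        using that(2) by blast
      ultimately have "a ` {..<n} = \<rho>' - \<eta>"
        using \<open>card (a ` {..<n}) = n\<close> by (metis card_seteq)
      with that(2) show ?thesis by blast
    qed
    have "d < card ?\<rho>"
      using X sphere \<rho>(1,3) maximal by (rule card_maximal_face_gt_if_sphere)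
    with \<rho>(2) show ?thesis by simp
  qed
  ultimately show ?thesis by simp
qed

section \<open>Real-rootedness and the fourth power sum of reciprocal roots\<close>

(* Newton's identity: if q_k = (-1)^k e_k for the elementary symmetric functions e_k
   of x_1, ..., x_n, then newton_p4 q_1 q_2 q_3 q_4 = \<Sum> x_i^4. *)
definition newton_p4 :: "'b::comm_ring_1 \<Rightarrow> 'b \<Rightarrow> 'b \<Rightarrow> 'b \<Rightarrow> 'b" where
  "newton_p4 q1 q2 q3 q4 = q1 ^ 4 - 4 * q1 ^ 2 * q2 + 2 * q2 ^ 2 + 4 * q1 * q3 - 4 * q4"

definition recip_root_p4 :: "'b::field poly \<Rightarrow> 'b" where
  "recip_root_p4 P =
    (let q = (\<lambda>k. Polynomial.coeff P k / Polynomial.coeff P 0) in newton_p4 (q 1) (q 2) (q 3) (q 4))"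

lemma newton_p4_linear_factor:
  "newton_p4 (q1 - y) (q2 - y * q1) (q3 - y * q2) (q4 - y * q3) = newton_p4 q1 q2 q3 q4 + y ^ 4"
  unfolding newton_p4_def by (simp add: power2_eq_square power4_eq_xxxx algebra_simps)

lemma recip_root_p4_linear_factor:
  fixes P :: "'b::field poly"
  assumes "a \<noteq> 0" "Polynomial.coeff P 0 \<noteq> 0"
  shows "recip_root_p4 ([:-a, 1:] * P) = recip_root_p4 P + (1 / a) ^ 4"
proof -
  define q where "q R k = Polynomial.coeff R k / Polynomial.coeff R 0" for R :: "'b poly" and k
  let ?Q = "[:-a, 1:] * P"
  have step: "q ?Q (Suc k) = q P (Suc k) - 1 / a * q P k" for k
    using assms by (simp add: q_def mult_pCons_left field_simps)
  have "q ?Q 1 = q P 1 - 1 / a" "q ?Q 2 = q P 2 - 1 / a * q P 1"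
    "q ?Q 3 = q P 3 - 1 / a * q P 2" "q ?Q 4 = q P 4 - 1 / a * q P 3"
    using step[of 0] step[of 1] step[of 2] step[of 3] assms(2)
    by (simp_all add: q_def numeral_eq_Suc)
  moreover have "recip_root_p4 R = newton_p4 (q R 1) (q R 2) (q R 3) (q R 4)" for R
    by (simp add: recip_root_p4_def q_def)
  ultimately show ?thesis
    by (simp only: newton_p4_linear_factor)
qed

lemma recip_root_p4_prod:
  fixes A :: "'b::field multiset"
  assumes "0 \<notin># A"
  shows "recip_root_p4 (\<Prod>a\<in>#A. [:-a, 1:]) = (\<Sum>a\<in>#A. (1 / a) ^ 4)"
  using assms
proof (induction A)
  case (add a A)
  then have "a \<noteq> 0" and "Polynomial.coeff (\<Prod>a\<in>#A. [:-a, 1:]) 0 \<noteq> 0"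
    by (auto simp: poly_0_coeff_0[symmetric] poly_prod_mset)
  with add show ?case
    by (simp del: mult_pCons_left add: recip_root_p4_linear_factor add.commute)
qed (simp add: recip_root_p4_def newton_p4_def)

lemma recip_root_p4_nonneg_if_real_rooted:
  fixes P :: "complex poly"
  assumes "poly P 0 \<noteq> 0" and "\<And>z. poly P z = 0 \<Longrightarrow> z \<in> \<real>"
  shows "recip_root_p4 P \<ge> 0"
  (* in the order of HOL-Library.Complex_Order, i.e. real and nonnegative *)
proof -
  have "P \<noteq> 0" using assms(1) by auto
  have roots: "0 \<notin># proots P" "\<forall>a\<in>#proots P. a \<in> \<real>"
    using assms \<open>P \<noteq> 0\<close> by auto
  have "recip_root_p4 P
      = recip_root_p4 (Polynomial.smult (lead_coeff P) (\<Prod>a\<in>#proots P. [:-a, 1:]))"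
    by (simp add: complex_poly_decompose_multiset)
  also have "\<dots> = (\<Sum>a\<in>#proots P. (1 / a) ^ 4)"
    using recip_root_p4_prod[OF roots(1)] \<open>P \<noteq> 0\<close>
    by (simp add: recip_root_p4_def Let_def)
  also have "\<dots> \<ge> 0"
  proof -
    have "0 \<le> (1 / a) ^ 4" if "a \<in> \<real>" for a :: complex
    proof -
      from that obtain r where "a = of_real r" by (auto elim: Reals_cases)
      then have "(1 / a) ^ 4 = of_real ((1 / r) ^ 4)" by simp
      then show ?thesis by (simp add: less_eq_complex_def)
    qed
    with roots(2) show ?thesis
      using sum_mset_mono[of "proots P" "\<lambda>_. 0" "\<lambda>a. (1 / a) ^ 4"] by simp
  qed
  finally show ?thesis .
qed

lemma map_poly_of_real_pcompose:
  fixes p q :: "real poly"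
  shows "map_poly (of_real :: real \<Rightarrow> 'a::{real_algebra_1,comm_ring_1}) (pcompose p q)
    = pcompose (map_poly of_real p) (map_poly of_real q)"
proof (induction p)
  case (pCons a p)
  have hom: "map_poly (of_real :: real \<Rightarrow> 'a) (r + s) = map_poly of_real r + map_poly of_real s"
    "map_poly (of_real :: real \<Rightarrow> 'a) (r * s) = map_poly of_real r * map_poly of_real s"
    for r s :: "real poly"
    by (rule poly_eqI; simp add: coeff_map_poly coeff_mult)+
  from pCons show ?case
    by (simp add: pcompose_pCons map_poly_pCons hom)
qed simp

lemma recip_root_p4_of_real:
  "recip_root_p4 (map_poly (of_real :: real \<Rightarrow> 'a::real_field) P) = of_real (recip_root_p4 P)"
  by (simp add: recip_root_p4_def newton_p4_def coeff_map_poly)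

lemma real_poly_nonreal_root_if_recip_root_p4_neg:
  fixes p :: "real poly"
  assumes "poly p c \<noteq> 0" and "recip_root_p4 (pcompose p [:c, 1:]) < 0"
  shows "\<exists>z::complex. poly (map_poly of_real p) z = 0 \<and> z \<notin> \<real>"
proof (rule ccontr)
  assume "\<not> ?thesis"
  then have real_roots: "z \<in> \<real>" if "poly (map_poly of_real p) z = 0" for z :: complex
    using that by blast
  define Q where "Q = map_poly complex_of_real (pcompose p [:c, 1:])"
  have poly_Q: "poly Q z = poly (map_poly of_real p) (z + of_real c)" for z
    by (simp add: Q_def map_poly_of_real_pcompose poly_pcompose map_poly_pCons add.commute)
  have "poly Q 0 \<noteq> 0"
    using assms(1) by (simp add: Q_def poly_0_coeff_0 coeff_map_poly)
  moreover have "z \<in> \<real>" if "poly Q z = 0" for z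
    using real_roots[of "z + of_real c"] that Reals_diff[of "z + of_real c" "of_real c"]
    by (simp add: poly_Q)
  ultimately have "recip_root_p4 Q \<ge> 0"
    by (rule recip_root_p4_nonneg_if_real_rooted)
  with assms(2) show False
    by (simp add: Q_def recip_root_p4_of_real less_eq_complex_def)
qed

lemma recip_root_p4_add_monom4_mult:
  fixes P R :: "'b::field poly"
  assumes "Polynomial.coeff P 0 \<noteq> 0"
  shows "recip_root_p4 (P + Polynomial.monom c 4 * R)
    = recip_root_p4 P - 4 * c * Polynomial.coeff R 0 / Polynomial.coeff P 0"
proof -
  let ?q = "\<lambda>k. Polynomial.coeff P k / Polynomial.coeff P 0"
  have "Polynomial.coeff (P + Polynomial.monom c 4 * R) k = Polynomial.coeff P k" if "k < 4" for k
    using that by (simp add: coeff_monom_mult)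
  from this[of 0] this[of 1] this[of 2] this[of 3]
  have "recip_root_p4 (P + Polynomial.monom c 4 * R)
      = newton_p4 (?q 1) (?q 2) (?q 3)
          ((Polynomial.coeff P 4 + c * Polynomial.coeff R 0) / Polynomial.coeff P 0)"
    by (simp add: recip_root_p4_def coeff_monom_mult)
  moreover have "recip_root_p4 P = newton_p4 (?q 1) (?q 2) (?q 3) (?q 4)"
    by (simp add: recip_root_p4_def)
  ultimately show ?thesis
    by (simp add: newton_p4_def add_divide_distrib)
qed

lemma eventually_nonreal_root:
  fixes H :: "real poly"
  assumes "poly H (-1) < 0"
  shows "\<forall>\<^sub>F m in sequentially. \<exists>z::complex.
    poly (map_poly of_real (H + Polynomial.smult (real m) ([:0, 1:] * [:1, 1:] ^ 4))) z = 0 \<and> z \<notin> \<real>"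
proof -
  let ?p = "\<lambda>m. H + Polynomial.smult (real m) ([:0, 1:] * [:1, 1:] ^ 4)"
  define A where "A = pcompose H [:-1, 1:]"
  have A0: "Polynomial.coeff A 0 = poly H (-1)"
    by (simp add: A_def)
  (* t (1 + t)^4 becomes t^4 (t - 1): only the coefficient of t^4 among the first five moves. *)
  have shift: "pcompose (Polynomial.smult (real m) ([:0, 1:] * [:1, 1:] ^ 4)) [:-1, 1:]
      = Polynomial.monom (real m) 4 * [:-1, 1:]" for m
    by (simp add: poly_eq_poly_eq_iff[symmetric] poly_pcompose poly_monom fun_eq_iff algebra_simps)
  obtain M :: nat where M: "recip_root_p4 A * - poly H (-1) / 4 < real M"
    using reals_Archimedean2 by blast
  have "\<exists>z::complex. poly (map_poly of_real (?p m)) z = 0 \<and> z \<notin> \<real>" if "m \<ge> M" for m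
  proof (rule real_poly_nonreal_root_if_recip_root_p4_neg)
    show "poly (?p m) (- 1) \<noteq> 0"
      using assms by simp
    have "recip_root_p4 (pcompose (?p m) [:-1, 1:]) = recip_root_p4 A + 4 * real m / poly H (-1)"
      using recip_root_p4_add_monom4_mult[of A "real m" "[:-1, 1:]"] assms A0
      unfolding pcompose_add shift A_def[symmetric] by simp
    also have "\<dots> < 0"
      using M that assms by (simp add: field_simps)
    finally show "recip_root_p4 (pcompose (?p m) [:-1, 1:]) < 0" .
  qed
  then show ?thesis
    unfolding eventually_sequentially by blast
qed

theorem theorem3p3p3:
  fixes X :: "'a set set" and \<eta> :: "'a set"
  assumes "infinite (UNIV :: 'a set)"
    and "triangulates_sphere X 5"
    and "flag X"
    and "\<eta> \<in> X" and "card \<eta> = 2"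
    and "is_cross_polytope (link X \<eta>)"
    and "poly (h_poly 6 X) (-1) < 0"
  shows "\<exists>M. \<forall>m \<ge> M. \<forall>ed e. multi_sub_data X \<eta> m ed e \<longrightarrow>
           (\<exists>z::complex. poly (map_poly complex_of_real (h_poly 6 (sub_iter ed e m X))) z = 0
                          \<and> z \<notin> \<real>)"
proof -
  have X: "simplicial_complex X" and sphere: "realization X homeomorphic_space nsphere 5"
    using assms(2) unfolding triangulates_sphere_def by auto
  obtain n a b
    where cross: "inj_on a {..<n}" "inj_on b {..<n}" "a ` {..<n} \<inter> b ` {..<n} = {}"
      and link: "link X \<eta> = cross a b n"
    using assms(6) unfolding is_cross_polytope_def by blast
  have "n = 4"
    using cross_polytope_link_dim[OF X sphere assms(4,5) link cross(1)] by simp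
  then have "card \<tau> \<le> 4" if "\<tau> \<in> link X \<eta>" for \<tau>
    using that card_cross_face_le unfolding link by blast
  then have increment: "sub_h_increment 6 (link X \<eta>) = [:0, 1:] * [:1, 1:] ^ 4"
    using sub_h_increment_eq[of "link X \<eta>" 4] h_poly_cross[OF cross] \<open>n = 4\<close>
    by (simp add: link)
  obtain M where M: "\<And>m. m \<ge> M \<Longrightarrow> \<exists>z::complex.
      poly (map_poly of_real (h_poly 6 X + Polynomial.smult (real m) ([:0, 1:] * [:1, 1:] ^ 4))) z = 0
      \<and> z \<notin> \<real>"
    using eventually_nonreal_root[OF assms(7)] unfolding eventually_sequentially by blast
  show ?thesis
    using M h_poly_sub_iter[OF X assms(4,5)] by (auto simp: increment)
qed

end
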